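(* Let $n\ge 0$ and let $L$ be one of the divisor classes $2f_{\mathrm{cl}}$, $h+2f_{\mathrm{cl}}$ or $h+(n+2)f_{\mathrm{cl}}$ on $\mathbb F_n$. Let $\phi\in H^0(\mathbb F_n,\mathcal O(4L))$ and $\gamma\in H^0(\mathbb F_n,\mathcal O(6L))$. If a point $x\in\mathbb F_n$ satisfies $\operatorname{ord}_x(\phi)\ge 8$ and $\operatorname{ord}_x(\gamma)\ge 12$, then there is an irreducible curve $C\ni x$ with $\operatorname{ord}_C(\phi)\ge 4$ and $\operatorname{ord}_C(\gamma)\ge 6$.
   Context: $h$ is the class of the section of $\mathbb F_n$ of self-intersection $-n$ and $f_{\mathrm{cl}}$ the fiber class; $h+nf_{\mathrm{cl}}$ is the class of the section of self-intersection $+n$. $\operatorname{ord}_x$ is the multiplicity of a section at the point $x$, $\operatorname{ord}_C$ the vanishing order along the curve $C$ (with the convention that the zero section has infinite order). *)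

theory Defs
  imports "HOL-Computational_Algebra.Computational_Algebra"
begin

text \<open>
  Cox-ring model of the Hirzebruch surface F_n over the complex numbers.
  The Cox ring is C[t0,t1,x,y], represented as the nested polynomial type
  complex poly poly poly poly: the outermost variable is y, then x, then t1,
  and the innermost variable is t0.  Grading: t0, t1 have class f, x has
  class h (the (-n)-section), y has class h + n f.  Hence the monomial
  t0^a t1^b x^c y^d has class (c+d) h + (a+b+n d) f.
  Global sections of O(A h + B f) are exactly the Cox-ring elements that are
  homogeneous of class (A,B).
\<close>

type_synonym cox = "complex poly poly poly poly"

definition cox_coeff :: "cox \<Rightarrow> nat \<Rightarrow> nat \<Rightarrow> nat \<Rightarrow> nat \<Rightarrow> complex" where
  "cox_coeff g a b c d = coeff (coeff (coeff (coeff g d) c) b) a"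
  \<comment> \<open>coefficient of t0^a t1^b x^c y^d\<close>

definition cox_homogeneous :: "nat \<Rightarrow> nat \<Rightarrow> nat \<Rightarrow> cox \<Rightarrow> bool" where
  "cox_homogeneous n A B g \<longleftrightarrow>
     (\<forall>a b c d. cox_coeff g a b c d \<noteq> 0 \<longrightarrow> c + d = A \<and> a + b + n * d = B)"

definition cox_eval :: "cox \<Rightarrow> complex \<times> complex \<times> complex \<times> complex \<Rightarrow> complex" where
  "cox_eval g p = (case p of (t0, t1, x, y) \<Rightarrow>
     poly (poly (poly (poly g [:[:[:y:]:]:]) [:[:x:]:]) [:t1:]) t0)"

text \<open>Points of F_n: (t0,t1,x,y) with (t0,t1) \<noteq> 0 and (x,y) \<noteq> 0,
  modulo the free (C^*)^2-action.\<close>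
definition hirz_point :: "complex \<times> complex \<times> complex \<times> complex \<Rightarrow> bool" where
  "hirz_point p = (case p of (t0, t1, x, y) \<Rightarrow> (t0, t1) \<noteq> (0, 0) \<and> (x, y) \<noteq> (0, 0))"

definition D_y :: "cox \<Rightarrow> cox" where "D_y = pderiv"
definition D_x :: "cox \<Rightarrow> cox" where "D_x = map_poly pderiv"
definition D_t1 :: "cox \<Rightarrow> cox" where "D_t1 = map_poly (map_poly pderiv)"
definition D_t0 :: "cox \<Rightarrow> cox" where "D_t0 = map_poly (map_poly (map_poly pderiv))"

definition cox_partial :: "nat \<Rightarrow> nat \<Rightarrow> nat \<Rightarrow> nat \<Rightarrow> cox \<Rightarrow> cox" where
  "cox_partial i j k l g = (D_t0 ^^ i) ((D_t1 ^^ j) ((D_x ^^ k) ((D_y ^^ l) g)))"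

text \<open>ord_x(g) \<ge> m at the point of F_n represented by p.  Since the quotient
  map from the open subset of C^4 to F_n is a principal (C^*)^2-bundle, the
  multiplicity of the section at x equals the multiplicity at p of the Cox
  polynomial, i.e. all partial derivatives of total order < m vanish at p.\<close>
definition ord_pt_ge :: "cox \<Rightarrow> complex \<times> complex \<times> complex \<times> complex \<Rightarrow> nat \<Rightarrow> bool" where
  "ord_pt_ge g p m \<longleftrightarrow>
     (\<forall>i j k l. i + j + k + l < m \<longrightarrow> cox_eval (cox_partial i j k l g) p = 0)"

text \<open>Irreducible curves in F_n correspond to irreducible homogeneous elements
  of the Cox ring (up to scalars); the vanishing order of a section along the
  curve {c = 0} is the exponent of c in the section (infinite for 0).\<close>
definition ord_curve_ge :: "cox \<Rightarrow> cox \<Rightarrow> nat \<Rightarrow> bool" where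
  "ord_curve_ge c g m \<longleftrightarrow> c ^ m dvd g"

definition irreducible_curve :: "nat \<Rightarrow> cox \<Rightarrow> bool" where
  "irreducible_curve n c \<longleftrightarrow> irreducible c \<and> (\<exists>A B. cox_homogeneous n A B c)"

end

theory Submission
  imports Defs
begin

text \<open>
  Each admissible L has h-coefficient at most 1, so \<phi> and \<gamma> have degree A \<le> M in the
  fibre coordinates x, y, with M = 4 resp. 6, while their multiplicity at the point is at least 2M.
  Write such a section as the sum of F_cd(t0, t1) x^c y^d over c + d = A; each F_cd is a
  binary form, and since all x,y-derivatives of order A are constant in x, y, a t-derivative of
  order k < M of F_cd at (p0, p1) is, up to the factor c! d!, a derivative of order k + A < 2M of
  the section. So every F_cd vanishes to order M at (p0 : p1), hence is divisible by
  (p1 t0 - p0 t1)^M, and the curve C is the fibre {p1 t0 = p0 t1} through the point.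
\<close>

lemma map_poly_funpow:
  fixes f :: "'a::zero \<Rightarrow> 'a"
  assumes "f 0 = 0"
  shows "map_poly f ^^ k = map_poly (f ^^ k)"
proof (induction k)
  case 0
  show ?case by (simp add: fun_eq_iff map_poly_idI)
next
  case (Suc k)
  have "(f ^^ k) 0 = 0" by (induction k) (simp_all add: assms)
  with Suc show ?case by (simp add: fun_eq_iff map_poly_map_poly assms comp_def)
qed

lemma higher_pderiv_mult_linear:
  fixes L G :: "'a::idom poly"
  assumes "pderiv L = 1"
  shows "(pderiv ^^ Suc j) (L * G)
    = L * (pderiv ^^ Suc j) G + smult (of_nat (Suc j)) ((pderiv ^^ j) G)"
proof (induction j)
  case (Suc j)
  have "(pderiv ^^ Suc (Suc j)) (L * G)
      = pderiv (L * (pderiv ^^ Suc j) G + smult (of_nat (Suc j)) ((pderiv ^^ j) G))"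
    using Suc.IH by simp
  also have "\<dots>
      = L * (pderiv ^^ Suc (Suc j)) G + smult (1 + of_nat (Suc j)) ((pderiv ^^ Suc j) G)"
    by (simp add: pderiv_add pderiv_mult pderiv_smult assms smult_add_left del: of_nat_Suc)
  finally show ?case by (simp only: of_nat_Suc[of "Suc j"] add.commute)
qed (simp add: pderiv_mult assms)

lemma linear_power_dvd_if_higher_pderivs_vanish:
  fixes F :: "'a::{idom,ring_char_0} poly"
  assumes "\<forall>j<m. poly ((pderiv ^^ j) F) c = 0"
  shows "[:-c, 1:] ^ m dvd F"
  using assms
proof (induction m arbitrary: F)
  case 0
  then show ?case by simp
next
  case (Suc m)
  have "poly F c = 0" using Suc.prems by (metis funpow_0 zero_less_Suc)
  then obtain G where F: "F = [:-c, 1:] * G" by (auto simp: poly_eq_0_iff_dvd)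
  have "poly ((pderiv ^^ j) G) c = 0" if "j < m" for j
  proof -
    have "(pderiv ^^ Suc j) F
        = [:-c, 1:] * (pderiv ^^ Suc j) G + smult (of_nat (Suc j)) ((pderiv ^^ j) G)"
      unfolding F by (rule higher_pderiv_mult_linear) (simp add: pderiv_pCons)
    moreover have "poly ((pderiv ^^ Suc j) F) c = 0" using Suc.prems that by blast
    ultimately show ?thesis by (simp del: of_nat_Suc)
  qed
  then have "[:-c, 1:] ^ m dvd G" using Suc.IH by blast
  then show ?case unfolding F power_Suc by (rule mult_dvd_mono[OF dvd_refl])
qed

lemma poly_poly_conv_map_poly: "poly (poly G q) x = poly (map_poly (\<lambda>a. poly a x) G) (poly q x)"
  by (induction G) (simp_all add: map_poly_pCons)

lemma irreducible_linear_poly_unit_lead_coeff: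
  fixes a b :: "'a::idom"
  assumes "b dvd 1"
  shows "irreducible [:a, b:]"
proof (rule irreducibleI)
  have "b \<noteq> 0" using assms by auto
  then show "[:a, b:] \<noteq> 0" and "\<not> [:a, b:] dvd 1" by (auto simp: is_unit_poly_iff)
  have unit_if_const: "z dvd 1" if "[:a, b:] = z * w" and "degree z = 0" for z w
  proof -
    have "lead_coeff z * lead_coeff w = b"
      using \<open>b \<noteq> 0\<close> by (simp flip: that(1) lead_coeff_mult)
    then have "lead_coeff z dvd 1" using assms dvd_trans by (metis dvd_triv_left)
    moreover have "z = [:lead_coeff z:]" using that(2) by (metis degree_0_id)
    ultimately show ?thesis by (metis is_unit_const_poly_iff)
  qed
  fix x y
  assume xy: "[:a, b:] = x * y"
  then have "degree x + degree y = 1"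
    using \<open>b \<noteq> 0\<close>
    by (metis degree_mult_eq degree_pCons_eq_if mult_zero_left mult_zero_right pCons_eq_0_iff
        One_nat_def)
  then have "degree x = 0 \<or> degree y = 0" by auto
  then show "x dvd 1 \<or> y dvd 1" using unit_if_const xy by (metis mult.commute)
qed

lemma coeff_higher_pderiv_of_nat:
  "coeff ((pderiv ^^ m) f) k = of_nat (pochhammer (Suc k) m) * coeff f (k + m)"
  by (simp only: coeff_higher_pderiv pochhammer_of_nat)

lemma higher_pderiv_of_nat_mult:
  fixes p :: "'a::{comm_semiring_1,semiring_no_zero_divisors} poly"
  shows "(pderiv ^^ j) (of_nat k * p) = of_nat k * (pderiv ^^ j) p"
  by (simp add: of_nat_poly higher_pderiv_smult)

lemma map_poly_higher_pderiv_of_nat_mult: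
  fixes P :: "'a::{comm_semiring_1,semiring_no_zero_divisors} poly poly"
  shows "map_poly (pderiv ^^ i) (of_nat k * P) = of_nat k * map_poly (pderiv ^^ i) P"
  by (rule poly_eqI) (simp add: coeff_map_poly of_nat_poly higher_pderiv_smult)

text \<open>
  Binary forms live in K[t0][t1], with outer variable t1 as in the Cox ring, so
  [:[:0, p1:], [:-p0:]:] is the linear form p1 t0 - p0 t1 of the point (p0 : p1).
\<close>

definition binary_form :: "'a::zero poly poly \<Rightarrow> nat \<Rightarrow> bool" where
  "binary_form F e \<longleftrightarrow> (\<forall>a b. coeff (coeff F b) a \<noteq> 0 \<longrightarrow> a + b = e)"

lemma binary_form_pderiv:
  fixes F :: "'a::{comm_semiring_1,semiring_no_zero_divisors} poly poly"
  assumes "binary_form F e"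
  shows "binary_form (pderiv F) (e - 1)"
  unfolding binary_form_def
proof (intro allI impI)
  fix a b
  assume "coeff (coeff (pderiv F) b) a \<noteq> 0"
  then have "coeff (coeff F (Suc b)) a \<noteq> 0"
    by (auto simp: coeff_pderiv of_nat_poly simp del: of_nat_Suc)
  with assms have "a + Suc b = e" unfolding binary_form_def by blast
  then show "a + b = e - 1" by simp
qed

lemma binary_form_higher_pderiv:
  fixes F :: "'a::{comm_semiring_1,semiring_no_zero_divisors} poly poly"
  assumes "binary_form F e"
  shows "binary_form ((pderiv ^^ j) F) (e - j)"
proof (induction j)
  case (Suc j)
  then show ?case using binary_form_pderiv by fastforce
qed (simp add: assms)

lemma binary_form_restrict_diagonal:
  fixes F :: "'a::{comm_semiring_1,semiring_no_zero_divisors} poly poly"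
  assumes "binary_form F e"
  shows "poly F [:0, r:] = monom (coeff (poly F [:0, r:]) e) e"
proof (rule poly_eqI)
  fix k
  have "coeff (poly F [:0, r:]) k = 0" if "k \<noteq> e"
  proof -
    have "[:0, r:] = monom r 1" by (simp add: monom_Suc monom_0 One_nat_def)
    then have "poly F [:0, r:] = (\<Sum>b\<le>degree F. monom (r ^ b) b * coeff F b)"
      by (simp add: poly_altdef monom_power mult.commute)
    moreover have "coeff (monom (r ^ b) b * coeff F b) k = 0" for b
      using assms that unfolding binary_form_def
      by (auto simp: coeff_monom_mult) (metis le_add_diff_inverse2 not_less)
    ultimately show ?thesis by (simp add: coeff_sum)
  qed
  then show "coeff (poly F [:0, r:]) k = coeff (monom (coeff (poly F [:0, r:]) e) e) k"
    by (auto simp: coeff_monom)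
qed

lemma binary_form_coeff_slice:
  assumes "binary_form F e"
  shows "map_poly (\<lambda>a. coeff a i) F = monom (coeff (coeff F (e - i)) i) (e - i)"
proof (rule poly_eqI)
  fix b
  have "coeff (coeff F b) i = 0" if "b \<noteq> e - i"
    using assms that unfolding binary_form_def by force
  then show "coeff (map_poly (\<lambda>a. coeff a i) F) b
      = coeff (monom (coeff (coeff F (e - i)) i) (e - i)) b"
    by (auto simp: coeff_map_poly coeff_monom)
qed

lemma binary_form_power_dvd_at_t0_ne_0:
  fixes F :: "'a::field_char_0 poly poly"
  assumes F: "binary_form F e" and "p0 \<noteq> 0"
    and vanish: "\<And>j. j < m \<Longrightarrow> poly (poly ((pderiv ^^ j) F) [:p1:]) p0 = 0"
  shows "[:[:0, p1:], [:-p0:]:] ^ m dvd F"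
proof -
  txt \<open>On the line t1 = c = (p1/p0) t0 the t1-derivatives of F are multiples of a power of t0,
    so vanishing at t0 = p0 makes them vanish identically: c is an m-fold root of F over K[t0].\<close>
  define c where "c = [:0, p1 / p0:]"
  have "poly ((pderiv ^^ j) F) c = 0" if "j < m" for j
  proof -
    let ?G = "poly ((pderiv ^^ j) F) c"
    have G: "?G = monom (coeff ?G (e - j)) (e - j)"
      unfolding c_def by (rule binary_form_restrict_diagonal[OF binary_form_higher_pderiv[OF F]])
    have "poly ?G p0 = poly (poly ((pderiv ^^ j) F) [:p1:]) p0"
      using \<open>p0 \<noteq> 0\<close> by (simp add: poly_poly_conv_map_poly c_def)
    then have "poly ?G p0 = 0" using vanish that by simp
    then have "coeff ?G (e - j) = 0" using \<open>p0 \<noteq> 0\<close> by (subst (asm) G) (simp add: poly_monom)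
    then show ?thesis using G by simp
  qed
  then have "[:-c, 1:] ^ m dvd F" by (intro linear_power_dvd_if_higher_pderivs_vanish) auto
  moreover have "[:-c, 1:] = smult [:-1 / p0:] [:[:0, p1:], [:-p0:]:]"
    using \<open>p0 \<noteq> 0\<close> by (simp add: c_def)
  then have "[:[:0, p1:], [:-p0:]:] ^ m dvd [:-c, 1:] ^ m"
    by (metis dvd_power_same dvd_refl dvd_smult)
  ultimately show ?thesis using dvd_trans by blast
qed

lemma binary_form_power_dvd_at_t0_eq_0:
  fixes F :: "'a::field_char_0 poly poly"
  assumes F: "binary_form F e" and "p1 \<noteq> 0"
    and vanish: "\<And>i. i < m \<Longrightarrow> poly (poly (map_poly (pderiv ^^ i) F) [:p1:]) 0 = 0"
  shows "[:[:0, p1:]:] ^ m dvd F"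
proof -
  have "coeff (coeff F b) i = 0" if "i < m" for i b
  proof -
    have "poly (poly (map_poly (pderiv ^^ i) F) [:p1:]) 0
        = poly (map_poly (\<lambda>a. fact i * coeff a i) F) p1"
      by (subst poly_poly_conv_map_poly)
        (simp add: map_poly_map_poly comp_def poly_0_coeff_0 coeff_higher_pderiv pochhammer_fact)
    also have "map_poly (\<lambda>a. fact i * coeff a i) F
        = smult (fact i) (map_poly (\<lambda>a. coeff a i) F)"
      by (rule poly_eqI) (simp add: coeff_map_poly)
    finally have "poly (map_poly (\<lambda>a. coeff a i) F) p1 = 0" using vanish that by simp
    then have "coeff (coeff F (e - i)) i = 0"
      using \<open>p1 \<noteq> 0\<close> by (simp add: binary_form_coeff_slice[OF F] poly_monom)
    then have "map_poly (\<lambda>a. coeff a i) F = 0" by (simp add: binary_form_coeff_slice[OF F])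
    then show ?thesis by (metis coeff_0 coeff_map_poly)
  qed
  then have "monom 1 m dvd coeff F b" for b by (simp add: monom_1_dvd_iff')
  moreover have "[:0, p1:] ^ m = smult (p1 ^ m) (monom 1 m)"
  proof -
    have "[:0, p1:] = monom p1 1" by (simp add: monom_Suc monom_0 One_nat_def)
    then show ?thesis by (simp add: monom_power smult_monom)
  qed
  ultimately have "[:0, p1:] ^ m dvd coeff F b" for b by (simp add: smult_dvd \<open>p1 \<noteq> 0\<close>)
  then show ?thesis by (simp add: poly_const_pow const_poly_dvd_iff)
qed

lemma binary_form_power_dvd:
  fixes F :: "'a::field_char_0 poly poly"
  assumes F: "binary_form F e" and "(p0, p1) \<noteq> (0, 0)"
    and vanish: "\<And>i j. i + j < m \<Longrightarrow>
      poly (poly (map_poly (pderiv ^^ i) ((pderiv ^^ j) F)) [:p1:]) p0 = 0"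
  shows "[:[:0, p1:], [:-p0:]:] ^ m dvd F"
proof (cases "p0 = 0")
  case True
  then have "[:[:0, p1:]:] ^ m dvd F"
    using assms vanish[where j = 0] by (intro binary_form_power_dvd_at_t0_eq_0) auto
  with True show ?thesis by simp
next
  case False
  have "map_poly (pderiv ^^ 0) G = G" for G :: "'a poly poly" by (simp add: map_poly_idI)
  with False show ?thesis
    using F vanish[where i = 0] by (intro binary_form_power_dvd_at_t0_ne_0) auto
qed

lemma cox_coeff_eq_0:
  assumes "cox_homogeneous n A B g" and "c + d \<noteq> A"
  shows "coeff (coeff g d) c = 0"
  using assms unfolding cox_homogeneous_def cox_coeff_def by (intro poly_eqI) (metis coeff_0)

lemma binary_form_cox_coeff:
  assumes "cox_homogeneous n A B g"
  shows "binary_form (coeff (coeff g d) c) (B - n * d)"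
  using assms unfolding cox_homogeneous_def cox_coeff_def binary_form_def by force

lemma funpow_D_x: "D_x ^^ k = map_poly (pderiv ^^ k)"
  unfolding D_x_def by (simp add: map_poly_funpow)

lemma funpow_D_t1: "D_t1 ^^ k = map_poly (map_poly (pderiv ^^ k))"
  unfolding D_t1_def by (simp add: map_poly_funpow)

lemma funpow_D_t0: "D_t0 ^^ k = map_poly (map_poly (map_poly (pderiv ^^ k)))"
  unfolding D_t0_def by (simp add: map_poly_funpow)

lemma D_x_D_y_top_degree:
  assumes hom: "cox_homogeneous n A B g" and "c + d = A"
  shows "(D_x ^^ c) ((D_y ^^ d) g) = [:[: of_nat (fact c * fact d) * coeff (coeff g d) c :]:]"
proof (rule poly_eqI, rule poly_eqI)
  fix d' c'
  have "coeff (coeff ((D_x ^^ c) ((D_y ^^ d) g)) d') c'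
      = of_nat (pochhammer (Suc c') c * pochhammer (Suc d') d) * coeff (coeff g (d' + d)) (c' + c)"
    by (simp add: funpow_D_x D_y_def coeff_map_poly coeff_higher_pderiv_of_nat
        higher_pderiv_of_nat_mult of_nat_poly del: of_nat_Suc)
  also have "\<dots> = coeff (coeff [:[: of_nat (fact c * fact d) * coeff (coeff g d) c :]:] d') c'"
    using cox_coeff_eq_0[OF hom] \<open>c + d = A\<close>
    by (cases "d' = 0 \<and> c' = 0") (auto simp: pochhammer_fact coeff_pCons split: nat.splits)
  finally show "coeff (coeff ((D_x ^^ c) ((D_y ^^ d) g)) d') c'
      = coeff (coeff [:[: of_nat (fact c * fact d) * coeff (coeff g d) c :]:] d') c'" .
qed

lemma cox_eval_cox_partial_top_degree:
  assumes "cox_homogeneous n A B g" and "c + d = A"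
  shows "cox_eval (cox_partial i j c d g) (p0, p1, px, py)
    = fact c * fact d
      * poly (poly (map_poly (pderiv ^^ i) ((pderiv ^^ j) (coeff (coeff g d) c))) [:p1:]) p0"
  by (simp add: cox_partial_def D_x_D_y_top_degree[OF assms] funpow_D_t0 funpow_D_t1 cox_eval_def
      map_poly_pCons higher_pderiv_of_nat_mult map_poly_higher_pderiv_of_nat_mult
      del: of_nat_fact of_nat_mult) simp

lemma cox_fibre_power_dvd:
  assumes hom: "cox_homogeneous n A B g" and "A \<le> M"
    and pt: "hirz_point (p0, p1, px, py)" and ord: "ord_pt_ge g (p0, p1, px, py) (2 * M)"
  shows "[:[:[:[:0, p1:], [:-p0:]:]:]:] ^ M dvd g"
proof -
  have "[:[:0, p1:], [:-p0:]:] ^ M dvd coeff (coeff g d) c" for c d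
  proof (cases "c + d = A")
    case True
    have "poly (poly (map_poly (pderiv ^^ i) ((pderiv ^^ j) (coeff (coeff g d) c))) [:p1:]) p0 = 0"
      if "i + j < M" for i j
    proof -
      have "cox_eval (cox_partial i j c d g) (p0, p1, px, py) = 0"
        using ord that True \<open>A \<le> M\<close> unfolding ord_pt_ge_def by simp
      then show ?thesis by (simp add: cox_eval_cox_partial_top_degree[OF hom True])
    qed
    moreover have "(p0, p1) \<noteq> (0, 0)" using pt by (simp add: hirz_point_def)
    ultimately show ?thesis by (intro binary_form_power_dvd[OF binary_form_cox_coeff[OF hom]])
  qed (simp add: cox_coeff_eq_0[OF hom])
  then show ?thesis by (simp add: poly_const_pow const_poly_dvd_iff)
qed

lemma irreducible_curve_fibre:
  assumes "(p0, p1) \<noteq> (0, 0)"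
  shows "irreducible_curve n [:[:[:[:0, p1:], [:-p0:]:]:]:]"
proof -
  have "irreducible [:[:0, p1:], [:-p0:]:]"
  proof (cases "p0 = 0")
    case True
    with assms show ?thesis by (simp add: irreducible_const_poly_iff irreducible_linear_field_poly)
  next
    case False
    then show ?thesis
      by (intro irreducible_linear_poly_unit_lead_coeff) (simp add: is_unit_const_poly_iff dvd_field_iff)
  qed
  moreover have "cox_homogeneous n 0 1 [:[:[:[:0, p1:], [:-p0:]:]:]:]"
    unfolding cox_homogeneous_def cox_coeff_def by (auto simp: coeff_pCons split: nat.splits)
  ultimately show ?thesis
    unfolding irreducible_curve_def by (auto simp: irreducible_const_poly_iff)
qed

theorem mainTheorem8:
  fixes n :: nat and La Lb :: nat and \<phi> \<gamma> :: cox
    and p :: "complex \<times> complex \<times> complex \<times> complex"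
  assumes L: "(La, Lb) \<in> {(0, 2), (1, 2), (1, n + 2)}"
    and phi: "cox_homogeneous n (4 * La) (4 * Lb) \<phi>"
    and gam: "cox_homogeneous n (6 * La) (6 * Lb) \<gamma>"
    and pt: "hirz_point p"
    and o1: "ord_pt_ge \<phi> p 8"
    and o2: "ord_pt_ge \<gamma> p 12"
  shows "\<exists>C. irreducible_curve n C \<and> cox_eval C p = 0
             \<and> ord_curve_ge C \<phi> 4 \<and> ord_curve_ge C \<gamma> 6"
proof -
  obtain p0 p1 px py where p: "p = (p0, p1, px, py)" by (cases p) auto
  define C :: cox where "C = [:[:[:[:0, p1:], [:-p0:]:]:]:]"
  have "La \<le> 1" using L by auto
  have "irreducible_curve n C"
    using pt unfolding C_def p hirz_point_def by (intro irreducible_curve_fibre) simp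
  moreover have "cox_eval C p = 0" by (simp add: C_def cox_eval_def p algebra_simps)
  moreover have "ord_curve_ge C \<phi> 4"
    unfolding ord_curve_ge_def C_def
    using cox_fibre_power_dvd[OF phi _ pt[unfolded p], of 4] o1 \<open>La \<le> 1\<close> by (simp add: p)
  moreover have "ord_curve_ge C \<gamma> 6"
    unfolding ord_curve_ge_def C_def
    using cox_fibre_power_dvd[OF gam _ pt[unfolded p], of 6] o2 \<open>La \<le> 1\<close> by (simp add: p)
  ultimately show ?thesis by blast
qed

end
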